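(* For any history $\mathcal{F}_{t-1}$, conditioned on the event $E^f(t)$, the instantaneous regret $r_t=f(\mathbf{x}^* )-f(\mathbf{x}_t)$ satisfies \[ \mathbb{E}[r_t\mid\mathcal{F}_{t-1}]\le c_te^{C}\Big(1+\frac{10}{p}\Big)\mathbb{E}[\sigma_{t-1}(\mathbf{x}_t)\mid\mathcal{F}_{t-1}]+\frac{2B'}{t^2},\qquad p=\frac{1}{4e\sqrt\pi}. \]
   Context: $\mathcal{X}$ is a finite subset of the unit ball of $\mathbb{R}^d$; $f\sim\mathcal{GP}(0,k)$ with $k$ the NTK, $|f(\mathbf{x})|\le B'$ for all $\mathbf{x}$; observations $y=f(\mathbf{x})+\zeta$, $\zeta\sim\mathcal{N}(0,\sigma^2)$; $\mathbf{x}^*$ maximizes $f$. Queries are chosen in batches of size $B$ and indexed sequentially; $\mathrm{fb}[t]$ is the largest index whose observation is available when $\mathbf{x}_t$ is chosen ($t-\mathrm{fb}[t]\le B$). $\mu_{\mathrm{fb}[t]},\sigma_{\mathrm{fb}[t]}$: GP posterior mean/std given observations $1,\dots,\mathrm{fb}[t]$; $\sigma_{t-1}$: GP posterior std given inputs $1,\dots,t-1$. $\mathcal{F}_{t-1}$ is the history of collected inputs/outputs and pending inputs. $\beta_t=2\log(\pi^2t^2|\mathcal{X}|/(3\delta))$, $\delta\in(0,1)$, $c_t=\beta_t(1+\sqrt{2\log(|\mathcal{X}|t^2)})$. Given $\mathcal{F}_{t-1}$, $f_t\sim\mathcal{GP}(\mu_{\mathrm{fb}[t]},\beta_t^2\sigma^2_{\mathrm{fb}[t]})$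 and $\mathbf{x}_t=\arg\max_{\mathbf{x}}f_t(\mathbf{x})$. $E^f(t)$: $|\mu_{\mathrm{fb}[t]}(\mathbf{x})-f(\mathbf{x})|\le\beta_t\sigma_{\mathrm{fb}[t]}(\mathbf{x})$ for all $\mathbf{x}$. $C$ is a constant with $\max_{A\subset\mathcal{X},|A|\le B-1}\mathbb{I}(f;\mathbf{y}_A\mid\mathbf{y}_{1:\mathrm{fb}[t]})\le C$ for all $t\ge1$ ($\mathbf{y}_A$ noisy observations at $A$, $\mathbb{I}$ mutual information). *)

theory Defs
  imports "HOL-Probability.Probability" "Jordan_Normal_Form.Gauss_Jordan_Elimination"
          "Jordan_Normal_Form.Determinant"
begin

definition gram_mat :: "('a \<Rightarrow> 'a \<Rightarrow> real) \<Rightarrow> 'a list \<Rightarrow> real mat" where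
  "gram_mat k as = Matrix.mat (length as) (length as) (\<lambda>(i,j). k (as!i) (as!j))"

definition kern_vec :: "('a \<Rightarrow> 'a \<Rightarrow> real) \<Rightarrow> 'a list \<Rightarrow> 'a \<Rightarrow> real vec" where
  "kern_vec k xs x = Matrix.vec (length xs) (\<lambda>i. k (xs!i) x)"

definition reg_inv :: "('a \<Rightarrow> 'a \<Rightarrow> real) \<Rightarrow> real \<Rightarrow> 'a list \<Rightarrow> real mat" where
  "reg_inv k sn xs = the (mat_inverse (gram_mat k xs + (sn\<^sup>2) \<cdot>\<^sub>m 1\<^sub>m (length xs)))"

definition post_mean :: "('a \<Rightarrow> 'a \<Rightarrow> real) \<Rightarrow> real \<Rightarrow> 'a list \<Rightarrow> real list \<Rightarrow> 'a \<Rightarrow> real" where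
  "post_mean k sn xs ys x =
     scalar_prod (kern_vec k xs x) (reg_inv k sn xs *\<^sub>v Matrix.vec (length xs) (\<lambda>i. ys!i))"

definition post_cov :: "('a \<Rightarrow> 'a \<Rightarrow> real) \<Rightarrow> real \<Rightarrow> 'a list \<Rightarrow> 'a \<Rightarrow> 'a \<Rightarrow> real" where
  "post_cov k sn xs x x' = k x x' - scalar_prod (kern_vec k xs x) (reg_inv k sn xs *\<^sub>v kern_vec k xs x')"

definition post_sd :: "('a \<Rightarrow> 'a \<Rightarrow> real) \<Rightarrow> real \<Rightarrow> 'a list \<Rightarrow> 'a \<Rightarrow> real" where
  "post_sd k sn xs x = sqrt (post_cov k sn xs x x)"

text \<open>Mutual information I(f; y_A | y_{1:n}) between f and noisy observations at the
  (multi)set of inputs as, given the data at inputs xs (Gaussian closed form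
  1/2 log det(I + sn^{-2} K^{(n)}_A), K^{(n)} the posterior covariance).\<close>
definition info_gain :: "('a \<Rightarrow> 'a \<Rightarrow> real) \<Rightarrow> real \<Rightarrow> 'a list \<Rightarrow> 'a list \<Rightarrow> real" where
  "info_gain k sn xs as =
     1/2 * ln (det (1\<^sub>m (length as) + (1 / sn\<^sup>2) \<cdot>\<^sub>m gram_mat (post_cov k sn xs) as))"

definition psd_kernel :: "'a set \<Rightarrow> ('a \<Rightarrow> 'a \<Rightarrow> real) \<Rightarrow> bool" where
  "psd_kernel X k \<longleftrightarrow> (\<forall>x\<in>X. \<forall>x'\<in>X. k x x' = k x' x) \<and>
     (\<forall>c :: 'a \<Rightarrow> real. (\<Sum>x\<in>X. \<Sum>x'\<in>X. c x * c x' * k x x') \<ge> 0)"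

definition normal_rv :: "'w measure \<Rightarrow> ('w \<Rightarrow> real) \<Rightarrow> real \<Rightarrow> real \<Rightarrow> bool" where
  "normal_rv M Y m v \<longleftrightarrow> Y \<in> borel_measurable M \<and>
     (if v = 0 then (AE \<omega> in M. Y \<omega> = m) else distributed M lborel Y (normal_density m (sqrt v)))"

definition gaussian_field ::
  "'w measure \<Rightarrow> ('w \<Rightarrow> 'a \<Rightarrow> real) \<Rightarrow> 'a set \<Rightarrow> ('a \<Rightarrow> real) \<Rightarrow> ('a \<Rightarrow> 'a \<Rightarrow> real) \<Rightarrow> bool" where
  "gaussian_field M F X m K \<longleftrightarrow>
     (\<forall>c :: 'a \<Rightarrow> real. normal_rv M (\<lambda>\<omega>. \<Sum>x\<in>X. c x * F \<omega> x) (\<Sum>x\<in>X. c x * m x)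
        (\<Sum>x\<in>X. \<Sum>x'\<in>X. c x * c x' * K x x'))"

definition ts_beta :: "nat \<Rightarrow> real \<Rightarrow> nat \<Rightarrow> real" where
  "ts_beta nX \<delta> t = 2 * ln (pi\<^sup>2 * (real t)\<^sup>2 * real nX / (3 * \<delta>))"

definition ts_c :: "nat \<Rightarrow> real \<Rightarrow> nat \<Rightarrow> real" where
  "ts_c nX \<delta> t = ts_beta nX \<delta> t * (1 + sqrt (2 * ln (real nX * (real t)\<^sup>2)))"

definition ts_p :: real where
  "ts_p = 1 / (4 * exp 1 * sqrt pi)"

end

theory Submission
  imports Defs "HOL-Real_Asymp.Real_Asymp"
begin

text \<open>
  Write sd = beta_t * sigma_fb and a = sqrt (2 ln (|X| t^2)).  By the Gaussian tail bound and a union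
  bound over X, outside an event of probability at most 1/t^2 every sample f_t(x) lies within
  a * sd(x) of the posterior mean, which itself lies within sd(x) of f(x).  Call x unsaturated if
  f(x*) - f(x) <= (1 + a) sd(x), and let xb be the unsaturated point of least sd.  On the good
  event the regret of x_t is at most 2 (1 + a) sd(xb) + (1 + a) sd(x_t).  With probability at
  least p/5 the sample at x* exceeds its mean by one standard deviation while no saturated point
  is sampled high, which forces x_t to be unsaturated; hence sd(xb) <= (5/p) E sd(x_t).
  Finally sigma_fb <= e^C sigma_(t-1): each pending input z shrinks the posterior variance by at
  most the factor 1 + sigma(z)^2 / sn^2, and these factors multiply (Schur complements) to
  det (I + sn^-2 K_A) = exp (2 I(f; y_A)).\<close>

section \<open>Positive semidefinite kernels\<close>

lemma psd_kernel_sym: "psd_kernel X K \<Longrightarrow> x \<in> X \<Longrightarrow> y \<in> X \<Longrightarrow> K x y = K y x"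
  unfolding psd_kernel_def by blast

lemma psd_kernel_quadratic_form_nonneg:
  "psd_kernel X K \<Longrightarrow> 0 \<le> (\<Sum>x\<in>X. \<Sum>y\<in>X. c x * c y * K x y)"
  unfolding psd_kernel_def by blast

lemma sum_nth_regroup:
  fixes v :: "nat \<Rightarrow> 'b::comm_semiring_1"
  assumes "finite X" "set ys \<subseteq> X"
  shows "(\<Sum>i<length ys. v i * g (ys!i)) =
    (\<Sum>x\<in>X. (\<Sum>i | i < length ys \<and> ys!i = x. v i) * g x)"
proof -
  have "(\<Sum>x\<in>X. (\<Sum>i | i < length ys \<and> ys!i = x. v i) * g x)
      = (\<Sum>x\<in>X. \<Sum>i\<in>{i\<in>{..<length ys}. ys!i = x}. v i * g (ys!i))"
  proof (intro sum.cong refl)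
    fix x
    have "(\<Sum>i | i < length ys \<and> ys!i = x. v i) * g x = (\<Sum>i | i < length ys \<and> ys!i = x. v i * g (ys!i))"
      unfolding sum_distrib_right by (rule sum.cong) auto
    then show "(\<Sum>i | i < length ys \<and> ys!i = x. v i) * g x = (\<Sum>i\<in>{i\<in>{..<length ys}. ys!i = x}. v i * g (ys!i))"
      by simp
  qed
  also have "\<dots> = (\<Sum>i<length ys. v i * g (ys!i))"
    using assms by (intro sum.group) auto
  finally show ?thesis by simp
qed

lemma psd_kernel_nth_quadratic_form_nonneg:
  assumes "finite X" "set ys \<subseteq> X" "psd_kernel X K"
  shows "0 \<le> (\<Sum>i<length ys. \<Sum>j<length ys. v i * v j * K (ys!i) (ys!j))"
proof -
  define c where "c x = (\<Sum>i | i < length ys \<and> ys!i = x. v i)" for x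
  have "(\<Sum>i<length ys. \<Sum>j<length ys. v i * v j * K (ys!i) (ys!j))
      = (\<Sum>i<length ys. v i * (\<Sum>j<length ys. v j * K (ys!i) (ys!j)))"
    by (simp add: sum_distrib_left mult.assoc)
  also have "\<dots> = (\<Sum>i<length ys. v i * (\<Sum>y\<in>X. c y * K (ys!i) y))"
    using sum_nth_regroup[OF assms(1,2), of v "\<lambda>y. K _ y"] unfolding c_def by simp
  also have "\<dots> = (\<Sum>x\<in>X. c x * (\<Sum>y\<in>X. c y * K x y))"
    using sum_nth_regroup[OF assms(1,2), of v "\<lambda>x. \<Sum>y\<in>X. c y * K x y"] unfolding c_def by simp
  also have "\<dots> = (\<Sum>x\<in>X. \<Sum>y\<in>X. c x * c y * K x y)"
    by (simp add: sum_distrib_left mult.assoc)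
  finally show ?thesis using psd_kernel_quadratic_form_nonneg[OF assms(3)] by simp
qed

lemma sum_sum_indicator_mult:
  fixes K :: "'a \<Rightarrow> 'a \<Rightarrow> real"
  assumes "finite X" "a \<in> X"
  shows "(\<Sum>x\<in>X. \<Sum>y\<in>X. (if x = a then s else 0) * (if y = a then s else 0) * K x y) = s\<^sup>2 * K a a"
proof -
  have "(\<Sum>y\<in>X. (if x = a then s else 0) * (if y = a then s else 0) * K x y)
      = (if x = a then s\<^sup>2 * K a a else 0)" for x
  proof (cases "x = a")
    case True
    have "(\<Sum>y\<in>X. s * (if y = a then s else 0) * K a y) = (\<Sum>y\<in>X. if y = a then s\<^sup>2 * K a y else 0)"
      by (intro sum.cong) (auto simp: power2_eq_square)
    with True assms show ?thesis by simp
  qed simp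
  then show ?thesis using assms by (simp add: sum.delta)
qed

lemma psd_kernel_diag_nonneg:
  assumes "finite X" "a \<in> X" "psd_kernel X K"
  shows "0 \<le> K a a"
  using psd_kernel_quadratic_form_nonneg[OF assms(3), of "\<lambda>x. if x = a then 1 else 0"]
    sum_sum_indicator_mult[OF assms(1,2), of 1 K] by simp

lemma quadratic_form_shift:
  fixes K :: "'a \<Rightarrow> 'a \<Rightarrow> real"
  assumes "finite X" "a \<in> X" "\<forall>x\<in>X. \<forall>y\<in>X. K x y = K y x"
  shows "(\<Sum>x\<in>X. \<Sum>y\<in>X. (c x + (if x = a then l else 0)) * (c y + (if y = a then l else 0)) * K x y)
    = (\<Sum>x\<in>X. \<Sum>y\<in>X. c x * c y * K x y) + 2 * l * (\<Sum>x\<in>X. c x * K x a) + l\<^sup>2 * K a a"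
proof -
  have expand: "(c x + (if x = a then l else 0)) * (c y + (if y = a then l else 0)) * K x y
     = c x * c y * K x y + l * (if y = a then c x * K x y else 0) + l * (if x = a then c y * K x y else 0)
       + (if x = a then l else 0) * (if y = a then l else 0) * K x y" for x y
    by (auto simp: algebra_simps)
  have "(\<Sum>x\<in>X. \<Sum>y\<in>X. if x = a then c y * K x y else 0) = (\<Sum>y\<in>X. c y * K a y)"
    using assms(1,2) by (subst sum.swap) (simp add: sum.delta')
  also have "\<dots> = (\<Sum>x\<in>X. c x * K x a)"
    using assms(2,3) by (intro sum.cong) auto
  finally have swap: "(\<Sum>x\<in>X. \<Sum>y\<in>X. if x = a then c y * K x y else 0) = (\<Sum>x\<in>X. c x * K x a)" .
  show ?thesis
    unfolding expand sum.distrib sum_distrib_left[symmetric] swap sum_sum_indicator_mult[OF assms(1,2)]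
    using assms(1,2) by (simp add: sum.delta')
qed

lemma discriminant_le_of_quadratic_nonneg:
  fixes Q L A :: real
  assumes nonneg: "\<And>l. 0 \<le> Q + 2 * l * L + l\<^sup>2 * A" and "0 \<le> A"
  shows "L\<^sup>2 \<le> Q * A"
proof (cases "A = 0")
  case True
  \<comment> \<open>a linear function of l that is nonnegative everywhere is constant\<close>
  have "L = 0"
  proof (rule ccontr)
    assume "L \<noteq> 0"
    have "0 \<le> Q + 2 * (- (\<bar>Q\<bar> + 1) / (2 * L)) * L"
      using nonneg[of "- (\<bar>Q\<bar> + 1) / (2 * L)"] True by simp
    also have "\<dots> = Q - (\<bar>Q\<bar> + 1)" using \<open>L \<noteq> 0\<close> by simp
    finally show False by linarith
  qed
  then show ?thesis using True by simp
next
  case False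
  with \<open>0 \<le> A\<close> have "A > 0" by simp
  with nonneg[of "- L / A"] have "0 \<le> Q - L\<^sup>2 / A"
    by (simp add: power2_eq_square field_simps)
  with \<open>A > 0\<close> show ?thesis by (simp add: field_simps)
qed

lemma psd_kernel_cauchy_schwarz:
  fixes K :: "'a \<Rightarrow> 'a \<Rightarrow> real"
  assumes "finite X" "a \<in> X" "psd_kernel X K"
  shows "(\<Sum>x\<in>X. c x * K x a)\<^sup>2 \<le> (\<Sum>x\<in>X. \<Sum>y\<in>X. c x * c y * K x y) * K a a"
proof (rule discriminant_le_of_quadratic_nonneg)
  fix l
  show "0 \<le> (\<Sum>x\<in>X. \<Sum>y\<in>X. c x * c y * K x y) + 2 * l * (\<Sum>x\<in>X. c x * K x a) + l\<^sup>2 * K a a"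
    using psd_kernel_quadratic_form_nonneg[OF assms(3), of "\<lambda>x. c x + (if x = a then l else 0)"]
    by (simp add: quadratic_form_shift[OF assms(1,2)] psd_kernel_sym[OF assms(3)])
qed (rule psd_kernel_diag_nonneg[OF assms])

section \<open>Posterior covariance under a new observation\<close>

definition reg_gram :: "('a \<Rightarrow> 'a \<Rightarrow> real) \<Rightarrow> real \<Rightarrow> 'a list \<Rightarrow> real mat" where
  "reg_gram k sn xs = gram_mat k xs + (sn\<^sup>2) \<cdot>\<^sub>m 1\<^sub>m (length xs)"

lemma reg_gram_carrier [simp]: "reg_gram k sn xs \<in> carrier_mat (length xs) (length xs)"
  unfolding reg_gram_def gram_mat_def by auto

lemma reg_gram_dim [simp]:
  "dim_row (reg_gram k sn xs) = length xs" "dim_col (reg_gram k sn xs) = length xs"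
  unfolding reg_gram_def gram_mat_def by auto

lemma reg_gram_index:
  "i < length xs \<Longrightarrow> j < length xs \<Longrightarrow>
    reg_gram k sn xs $$ (i, j) = k (xs!i) (xs!j) + (if i = j then sn\<^sup>2 else 0)"
  unfolding reg_gram_def gram_mat_def by auto

lemma mult_mat_vec_index_sum:
  "A \<in> carrier_mat m n \<Longrightarrow> v \<in> carrier_vec n \<Longrightarrow> i < m \<Longrightarrow> (A *\<^sub>v v) $ i = (\<Sum>j<n. A $$ (i, j) * v $ j)"
  by (auto simp: scalar_prod_def row_def atLeast0LessThan intro!: sum.cong)

lemma scalar_prod_sum: "dim_vec w = n \<Longrightarrow> u \<bullet> w = (\<Sum>i<n. u $ i * w $ i)"
  by (auto simp: scalar_prod_def atLeast0LessThan)

lemma kern_vec_carrier [simp]: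
  "kern_vec k xs x \<in> carrier_vec (length xs)" "dim_vec (kern_vec k xs x) = length xs"
  unfolding kern_vec_def by auto

lemma kern_vec_index [simp]: "i < length xs \<Longrightarrow> kern_vec k xs x $ i = k (xs!i) x"
  unfolding kern_vec_def by auto

lemma quadratic_form_reg_gram:
  assumes "v \<in> carrier_vec (length xs)"
  shows "v \<bullet> (reg_gram k sn xs *\<^sub>v v) =
    (\<Sum>i<length xs. \<Sum>j<length xs. v$i * v$j * k (xs!i) (xs!j)) + sn\<^sup>2 * (\<Sum>i<length xs. v$i * v$i)"
proof -
  let ?n = "length xs"
  have row: "(reg_gram k sn xs *\<^sub>v v) $ i = (\<Sum>j<?n. k (xs!i) (xs!j) * v$j) + sn\<^sup>2 * v$i"
    if "i < ?n" for i
  proof -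
    have "(reg_gram k sn xs *\<^sub>v v) $ i = (\<Sum>j<?n. k (xs!i) (xs!j) * v$j + (if j = i then sn\<^sup>2 * v$i else 0))"
      using that assms by (subst mult_mat_vec_index_sum[of _ ?n ?n]) (auto simp: reg_gram_index distrib_right intro!: sum.cong)
    also have "\<dots> = (\<Sum>j<?n. k (xs!i) (xs!j) * v$j) + sn\<^sup>2 * v$i"
      using that by (simp add: sum.distrib)
    finally show ?thesis .
  qed
  have "v \<bullet> (reg_gram k sn xs *\<^sub>v v) = (\<Sum>i<?n. v$i * (reg_gram k sn xs *\<^sub>v v) $ i)"
    by (rule scalar_prod_sum) simp
  also have "\<dots> = (\<Sum>i<?n. v$i * ((\<Sum>j<?n. k (xs!i) (xs!j) * v$j) + sn\<^sup>2 * v$i))"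
    by (intro sum.cong) (simp_all del: index_mult_mat_vec add: row)
  finally show ?thesis by (simp add: distrib_left sum.distrib sum_distrib_left mult_ac)
qed

lemma det_reg_gram_nonzero:
  assumes "finite X" "set xs \<subseteq> X" "psd_kernel X k" "sn > 0"
  shows "det (reg_gram k sn xs) \<noteq> 0"
proof
  let ?n = "length xs"
  assume "det (reg_gram k sn xs) = 0"
  then obtain v where v: "v \<in> carrier_vec ?n" "v \<noteq> 0\<^sub>v ?n" "reg_gram k sn xs *\<^sub>v v = 0\<^sub>v ?n"
    using det_0_iff_vec_prod_zero_field[OF reg_gram_carrier] by blast
  have "(\<Sum>i<?n. \<Sum>j<?n. v$i * v$j * k (xs!i) (xs!j)) + sn\<^sup>2 * (\<Sum>i<?n. v$i * v$i) = 0"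
    using quadratic_form_reg_gram[OF v(1), of k sn] v by simp
  moreover have "0 \<le> (\<Sum>i<?n. \<Sum>j<?n. v$i * v$j * k (xs!i) (xs!j))"
    by (rule psd_kernel_nth_quadratic_form_nonneg[OF assms(1-3)])
  moreover have "0 \<le> (\<Sum>i<?n. v$i * v$i)" by (simp add: sum_nonneg)
  ultimately have "(\<Sum>i<?n. v$i * v$i) = 0"
    using \<open>sn > 0\<close> by (smt (verit) mult_pos_pos zero_less_power)
  then have "\<forall>i<?n. v$i = 0" by (simp add: sum_nonneg_eq_0_iff)
  then have "v = 0\<^sub>v ?n" using v(1) by (intro eq_vecI) auto
  with v(2) show False ..
qed

lemma reg_inv_reg_gram:
  assumes "finite X" "set xs \<subseteq> X" "psd_kernel X k" "sn > 0"
  shows "reg_inv k sn xs \<in> carrier_mat (length xs) (length xs)"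
    and "reg_inv k sn xs * reg_gram k sn xs = 1\<^sub>m (length xs)"
    and "reg_gram k sn xs * reg_inv k sn xs = 1\<^sub>m (length xs)"
proof -
  have "reg_gram k sn xs \<in> Units (ring_mat TYPE(real) (length xs) ())"
    by (rule det_non_zero_imp_unit[OF reg_gram_carrier det_reg_gram_nonzero[OF assms]])
  then obtain R where R: "mat_inverse (reg_gram k sn xs) = Some R"
    using mat_inverse(1)[OF reg_gram_carrier] by fastforce
  then have "reg_inv k sn xs = R" unfolding reg_inv_def reg_gram_def[symmetric] by simp
  with mat_inverse(2)[OF reg_gram_carrier R]
  show "reg_inv k sn xs \<in> carrier_mat (length xs) (length xs)"
    and "reg_inv k sn xs * reg_gram k sn xs = 1\<^sub>m (length xs)"
    and "reg_gram k sn xs * reg_inv k sn xs = 1\<^sub>m (length xs)" by auto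
qed

lemma reg_inv_mult_vec_eqI:
  assumes "finite X" "set xs \<subseteq> X" "psd_kernel X k" "sn > 0"
    and "z \<in> carrier_vec (length xs)" "reg_gram k sn xs *\<^sub>v z = b"
  shows "reg_inv k sn xs *\<^sub>v b = z"
  using assoc_mult_mat_vec[OF reg_inv_reg_gram(1)[OF assms(1-4)] reg_gram_carrier[of k sn] assms(5), symmetric]
    reg_inv_reg_gram(2)[OF assms(1-4)] assms(5,6) by simp

lemma reg_gram_mult_reg_inv_vec:
  assumes "finite X" "set xs \<subseteq> X" "psd_kernel X k" "sn > 0" "b \<in> carrier_vec (length xs)"
  shows "reg_gram k sn xs *\<^sub>v (reg_inv k sn xs *\<^sub>v b) = b"
  using assoc_mult_mat_vec[OF reg_gram_carrier[of k sn] reg_inv_reg_gram(1)[OF assms(1-4)] assms(5), symmetric]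
    reg_inv_reg_gram(3)[OF assms(1-4)] assms(5) by simp

lemma post_cov_eq_sum:
  assumes "finite X" "set xs \<subseteq> X" "psd_kernel X k" "sn > 0"
  shows "post_cov k sn xs x y = k x y - (\<Sum>i<length xs. k (xs!i) x * (reg_inv k sn xs *\<^sub>v kern_vec k xs y) $ i)"
  unfolding post_cov_def using reg_inv_reg_gram(1)[OF assms] by (subst scalar_prod_sum) auto

lemma sum_kern_mult_reg_inv:
  assumes "finite X" "set xs \<subseteq> X" "psd_kernel X k" "sn > 0"
  shows "(\<Sum>i<length xs. k (xs!i) x * (reg_inv k sn xs *\<^sub>v kern_vec k xs y) $ i) = k x y - post_cov k sn xs x y"
  using post_cov_eq_sum[OF assms] by simp

lemma post_cov_Nil: "post_cov k sn [] x y = k x y"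
  unfolding post_cov_def kern_vec_def by (simp add: scalar_prod_def)

lemma reg_gram_snoc_mult_vec:
  fixes z :: "real vec" and \<zeta> :: real
  assumes z: "z \<in> carrier_vec (length xs)"
  defines "ze \<equiv> Matrix.vec (Suc (length xs)) (\<lambda>i. if i < length xs then z $ i else \<zeta>)"
  shows "i < length xs \<Longrightarrow>
      (reg_gram k sn (xs @ [a]) *\<^sub>v ze) $ i = (reg_gram k sn xs *\<^sub>v z) $ i + k (xs!i) a * \<zeta>"
    and "(reg_gram k sn (xs @ [a]) *\<^sub>v ze) $ length xs =
      (\<Sum>j<length xs. k a (xs!j) * z $ j) + (k a a + sn\<^sup>2) * \<zeta>"
proof -
  let ?n = "length xs"
  have split: "(reg_gram k sn (xs @ [a]) *\<^sub>v ze) $ i =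
      (\<Sum>j<?n. reg_gram k sn (xs @ [a]) $$ (i, j) * z $ j) + reg_gram k sn (xs @ [a]) $$ (i, ?n) * \<zeta>"
    if "i \<le> ?n" for i
    using that by (subst mult_mat_vec_index_sum[of _ "Suc ?n" "Suc ?n"]) (auto simp: ze_def)
  show "(reg_gram k sn (xs @ [a]) *\<^sub>v ze) $ i = (reg_gram k sn xs *\<^sub>v z) $ i + k (xs!i) a * \<zeta>"
    if "i < ?n"
    using that z
    by (simp add: split mult_mat_vec_index_sum[of _ ?n ?n] reg_gram_index nth_append del: index_mult_mat_vec)
  show "(reg_gram k sn (xs @ [a]) *\<^sub>v ze) $ ?n = (\<Sum>j<?n. k a (xs!j) * z $ j) + (k a a + sn\<^sup>2) * \<zeta>"
    by (simp add: split reg_gram_index nth_append del: index_mult_mat_vec)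
qed

lemma reg_inv_snoc_mult_kern_vec:
  fixes xs :: "'a list" and y :: 'a
  assumes X: "finite X" "set xs \<subseteq> X" "psd_kernel X k" "sn > 0" and a: "a \<in> X"
    and s: "post_cov k sn xs a a + sn\<^sup>2 \<noteq> 0"
  defines "w \<equiv> \<lambda>u. reg_inv k sn xs *\<^sub>v kern_vec k xs u"
    and "\<zeta> \<equiv> post_cov k sn xs a y / (post_cov k sn xs a a + sn\<^sup>2)"
  shows "reg_inv k sn (xs @ [a]) *\<^sub>v kern_vec k (xs @ [a]) y =
    Matrix.vec (Suc (length xs)) (\<lambda>i. if i < length xs then w y $ i - \<zeta> * w a $ i else \<zeta>)"
proof -
  let ?n = "length xs" and ?P = "post_cov k sn xs"
  define z where "z = w y - \<zeta> \<cdot>\<^sub>v w a"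
  have w: "w u \<in> carrier_vec ?n" for u
    unfolding w_def using reg_inv_reg_gram(1)[OF X(1-4)] by simp
  have z: "z \<in> carrier_vec ?n" unfolding z_def using w by simp
  have z_index: "z $ i = w y $ i - \<zeta> * w a $ i" if "i < ?n" for i
    unfolding z_def using w[of y] w[of a] that by (simp add: carrier_vecD)
  have "(\<Sum>i<?n. k (xs!i) u * z $ i) = (\<Sum>i<?n. k (xs!i) u * w y $ i) - \<zeta> * (\<Sum>i<?n. k (xs!i) u * w a $ i)"
    for u by (simp add: z_index sum_subtractf sum_distrib_left algebra_simps)
  then have sum_z: "(\<Sum>i<?n. k (xs!i) u * z $ i) = (k u y - ?P u y) - \<zeta> * (k u a - ?P u a)" for u
    unfolding w_def sum_kern_mult_reg_inv[OF X(1-4)] .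
  have "xs!j \<in> X" if "j < ?n" for j using X(2) that by auto
  then have "(\<Sum>j<?n. k a (xs!j) * z $ j) = (\<Sum>j<?n. k (xs!j) a * z $ j)"
    using psd_kernel_sym[OF X(3) a] by (intro sum.cong) auto
  also have "\<dots> = (k a y - ?P a y) - \<zeta> * (k a a - ?P a a)" by (rule sum_z)
  finally have last_row: "(\<Sum>j<?n. k a (xs!j) * z $ j) + (k a a + sn\<^sup>2) * \<zeta> = k a y"
    using s unfolding \<zeta>_def by (simp add: field_simps)
  have "reg_gram k sn xs *\<^sub>v w u = kern_vec k xs u" for u
    unfolding w_def by (rule reg_gram_mult_reg_inv_vec[OF X(1-4)]) simp
  then have "(reg_gram k sn xs *\<^sub>v z) $ i = k (xs!i) y - \<zeta> * k (xs!i) a" if "i < ?n" for i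
    using that w by (simp add: z_def mult_minus_distrib_mat_vec[of _ ?n ?n] mult_mat_vec[of _ ?n ?n])
  then have "reg_gram k sn (xs @ [a]) *\<^sub>v Matrix.vec (Suc ?n) (\<lambda>i. if i < ?n then z $ i else \<zeta>)
      = kern_vec k (xs @ [a]) y"
    using reg_gram_snoc_mult_vec[OF z] last_row
    by (intro eq_vecI) (auto simp: kern_vec_def nth_append less_Suc_eq)
  from reg_inv_mult_vec_eqI[OF X(1) _ X(3,4) _ this] X(2) a show ?thesis
    by (auto simp: z_index intro!: eq_vecI)
qed

lemma post_cov_snoc:
  assumes X: "finite X" "set xs \<subseteq> X" "psd_kernel X k" "sn > 0" and a: "a \<in> X" and x: "x \<in> X"
    and s: "post_cov k sn xs a a + sn\<^sup>2 \<noteq> 0"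
  shows "post_cov k sn (xs @ [a]) x y = post_cov k sn xs x y
     - post_cov k sn xs x a * post_cov k sn xs a y / (post_cov k sn xs a a + sn\<^sup>2)"
proof -
  let ?n = "length xs" and ?P = "post_cov k sn xs"
  let ?w = "\<lambda>u. reg_inv k sn xs *\<^sub>v kern_vec k xs u" and ?\<zeta> = "?P a y / (?P a a + sn\<^sup>2)"
  have "post_cov k sn (xs @ [a]) x y
      = k x y - (\<Sum>i<Suc ?n. k ((xs @ [a])!i) x *
          Matrix.vec (Suc ?n) (\<lambda>i. if i < ?n then ?w y $ i - ?\<zeta> * ?w a $ i else ?\<zeta>) $ i)"
    using X a by (simp add: post_cov_eq_sum[of X "xs @ [a]"] reg_inv_snoc_mult_kern_vec[OF X a s])
  also have "\<dots> = k x y - (\<Sum>i<?n. k (xs!i) x * ?w y $ i) + ?\<zeta> * (\<Sum>i<?n. k (xs!i) x * ?w a $ i) - k a x * ?\<zeta>"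
    by (simp add: nth_append algebra_simps sum_subtractf sum_distrib_left)
  also have "\<dots> = ?P x y - ?\<zeta> * ?P x a"
    using psd_kernel_sym[OF X(3) a x]
    by (simp add: sum_kern_mult_reg_inv[OF X(1-4)] algebra_simps) (simp add: add_divide_distrib[symmetric])
  finally show ?thesis by simp
qed

lemma psd_kernel_cong:
  "(\<And>x y. x \<in> X \<Longrightarrow> y \<in> X \<Longrightarrow> K x y = K' x y) \<Longrightarrow> psd_kernel X K = psd_kernel X K'"
  unfolding psd_kernel_def by (auto intro!: sum.cong)

lemma psd_kernel_rank_one_downdate:
  fixes P :: "'a \<Rightarrow> 'a \<Rightarrow> real"
  assumes X: "finite X" "a \<in> X" and psd: "psd_kernel X P" and s: "P a a \<le> s" "0 < s"
  shows "psd_kernel X (\<lambda>x y. P x y - P x a * P a y / s)"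
  unfolding psd_kernel_def
proof (intro conjI ballI allI)
  fix x y assume "x \<in> X" "y \<in> X"
  then show "P x y - P x a * P a y / s = P y x - P y a * P a x / s"
    using psd_kernel_sym[OF psd] X(2) by (simp add: mult.commute)
next
  fix c :: "'a \<Rightarrow> real"
  define Q where "Q = (\<Sum>x\<in>X. \<Sum>y\<in>X. c x * c y * P x y)"
  define L where "L = (\<Sum>x\<in>X. c x * P x a)"
  have "(\<Sum>x\<in>X. \<Sum>y\<in>X. c x * c y * (P x y - P x a * P a y / s)) = Q - L * (\<Sum>y\<in>X. c y * P a y) / s"
    unfolding Q_def L_def by (simp add: algebra_simps sum_subtractf sum_product sum_divide_distrib)
  also have "(\<Sum>y\<in>X. c y * P a y) = L"
    unfolding L_def using psd_kernel_sym[OF psd _ X(2)] by (intro sum.cong) auto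
  finally have eq: "(\<Sum>x\<in>X. \<Sum>y\<in>X. c x * c y * (P x y - P x a * P a y / s)) = Q - L\<^sup>2 / s"
    by (simp add: power2_eq_square)
  have "L\<^sup>2 \<le> Q * P a a" unfolding L_def Q_def by (rule psd_kernel_cauchy_schwarz[OF X psd])
  also have "\<dots> \<le> Q * s"
    using psd_kernel_quadratic_form_nonneg[OF psd, of c] s(1) by (intro mult_left_mono) (simp_all add: Q_def)
  finally have "L\<^sup>2 / s \<le> Q" using s(2) by (simp add: divide_le_eq)
  then show "0 \<le> (\<Sum>x\<in>X. \<Sum>y\<in>X. c x * c y * (P x y - P x a * P a y / s))"
    unfolding eq by simp
qed

lemma psd_kernel_post_cov:
  assumes X: "finite X" "set xs \<subseteq> X" "psd_kernel X k" "sn > 0"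
  shows "psd_kernel X (post_cov k sn xs)"
  using X(2)
proof (induction xs rule: rev_induct)
  case Nil
  have "post_cov k sn [] = k" by (intro ext) (simp add: post_cov_Nil)
  with X(3) show ?case by simp
next
  case (snoc a xs)
  let ?P = "post_cov k sn xs" and ?s = "post_cov k sn xs a a + sn\<^sup>2"
  have xs: "set xs \<subseteq> X" and a: "a \<in> X" using snoc.prems by auto
  have psd: "psd_kernel X ?P" using snoc.IH xs by simp
  have "0 < ?s" using psd_kernel_diag_nonneg[OF X(1) a psd] X(4) by (simp add: add_nonneg_pos)
  then have "psd_kernel X (\<lambda>x y. ?P x y - ?P x a * ?P a y / ?s)"
    using X(4) by (intro psd_kernel_rank_one_downdate[OF X(1) a psd]) auto
  moreover have "post_cov k sn (xs @ [a]) x y = ?P x y - ?P x a * ?P a y / ?s" if "x \<in> X" for x y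
    using post_cov_snoc[OF X(1) xs X(3,4) a that] \<open>0 < ?s\<close> by simp
  ultimately show ?case by (subst psd_kernel_cong) auto
qed

lemma post_cov_diag_nonneg:
  "finite X \<Longrightarrow> set xs \<subseteq> X \<Longrightarrow> psd_kernel X k \<Longrightarrow> sn > 0 \<Longrightarrow> x \<in> X \<Longrightarrow> 0 \<le> post_cov k sn xs x x"
  by (rule psd_kernel_diag_nonneg[OF _ _ psd_kernel_post_cov])

lemma post_cov_diag_le_snoc:
  assumes X: "finite X" "set xs \<subseteq> X" "psd_kernel X k" "sn > 0" and a: "a \<in> X" and x: "x \<in> X"
  shows "post_cov k sn xs x x \<le> (1 + post_cov k sn xs a a / sn\<^sup>2) * post_cov k sn (xs @ [a]) x x"
proof -
  let ?P = "post_cov k sn xs"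
  have psd: "psd_kernel X ?P" by (rule psd_kernel_post_cov[OF X])
  define s where "s = ?P a a + sn\<^sup>2"
  have s: "s > 0" unfolding s_def using post_cov_diag_nonneg[OF X a] X(4) by (simp add: add_nonneg_pos)
  have "(?P x a)\<^sup>2 \<le> ?P x x * ?P a a"
    using psd_kernel_cauchy_schwarz[OF X(1) a psd, of "\<lambda>z. if z = x then 1 else 0"]
      sum_sum_indicator_mult[OF X(1) x, of 1 ?P] X(1) x by (simp add: if_distrib[where f="\<lambda>u. u * _"] cong: if_cong)
  then have "?P x a * ?P a x \<le> ?P x x * ?P a a"
    using psd_kernel_sym[OF psd a x] by (simp add: power2_eq_square)
  then have "?P x x - ?P x x * ?P a a / s \<le> ?P x x - ?P x a * ?P a x / s"
    using s by (simp add: divide_right_mono)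
  moreover have "?P x x * sn\<^sup>2 / s = ?P x x - ?P x x * ?P a a / s"
    using s unfolding s_def by (simp add: field_simps)
  ultimately have "?P x x * sn\<^sup>2 / s \<le> ?P x x - ?P x a * ?P a x / s" by simp
  also have "\<dots> = post_cov k sn (xs @ [a]) x x"
    using post_cov_snoc[OF X a x] s unfolding s_def by simp
  finally have "?P x x * sn\<^sup>2 / s \<le> post_cov k sn (xs @ [a]) x x" .
  then have "?P x x \<le> (s / sn\<^sup>2) * post_cov k sn (xs @ [a]) x x"
    using s X(4) by (simp add: field_simps)
  moreover have "s / sn\<^sup>2 = 1 + ?P a a / sn\<^sup>2" unfolding s_def using X(4) by (simp add: field_simps)
  ultimately show ?thesis by simp
qed

section \<open>Information gain controls the shrinkage of the posterior deviation\<close>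

lemma det_schur_complement_first:
  fixes A :: "real mat"
  assumes A: "A \<in> carrier_mat (Suc m) (Suc m)" and pivot: "A $$ (0, 0) \<noteq> 0"
  shows "det A = A $$ (0, 0) *
    det (Matrix.mat m m (\<lambda>(i, j). A $$ (Suc i, Suc j) - A $$ (Suc i, 0) * A $$ (0, Suc j) / A $$ (0, 0)))"
proof -
  let ?\<alpha> = "A $$ (0, 0)"
  \<comment> \<open>eliminate the first column below the pivot by a unit lower triangular matrix\<close>
  define L where "L = Matrix.mat (Suc m) (Suc m)
    (\<lambda>(i, j). if i = j then 1 else if j = 0 then - A $$ (i, 0) / ?\<alpha> else (0::real))"
  have L: "L \<in> carrier_mat (Suc m) (Suc m)" unfolding L_def by simp
  have "det L = prod_list (diag_mat L)"
    by (rule det_lower_triangular[OF _ L]) (auto simp: L_def)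
  also have "diag_mat L = map (\<lambda>i. 1) [0..<Suc m]"
    unfolding diag_mat_def by (intro map_cong) (auto simp: L_def)
  finally have det_L: "det L = 1" by (simp add: map_replicate_const)
  define N where "N = L * A"
  have N: "N \<in> carrier_mat (Suc m) (Suc m)" unfolding N_def using L A by simp
  have N_index: "N $$ (i, j) = A $$ (i, j) - (if i = 0 then 0 else A $$ (i, 0) * A $$ (0, j) / ?\<alpha>)"
    if "i < Suc m" "j < Suc m" for i j
  proof -
    have "N $$ (i, j) = (\<Sum>k<Suc m. L $$ (i, k) * A $$ (k, j))"
      unfolding N_def using that A L by (auto simp: scalar_prod_def atLeast0LessThan intro!: sum.cong)
    also have "\<dots> = (\<Sum>k<Suc m. (if k = i then A $$ (k, j) else 0)
        + (if k = 0 \<and> i \<noteq> 0 then - A $$ (i, 0) / ?\<alpha> * A $$ (k, j) else 0))"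
      using that by (intro sum.cong refl) (auto simp: L_def)
    also have "\<dots> = A $$ (i, j) - (if i = 0 then 0 else A $$ (i, 0) * A $$ (0, j) / ?\<alpha>)"
      unfolding sum.distrib using that by (cases "i = 0") (simp_all add: sum.delta)
    finally show ?thesis .
  qed
  have "det A = det N" unfolding N_def det_mult[OF L A] det_L by simp
  also have "\<dots> = (\<Sum>i<Suc m. N $$ (i, 0) * cofactor N i 0)"
    by (rule laplace_expansion_column[OF N]) simp
  also have "\<dots> = N $$ (0, 0) * cofactor N 0 0"
    using N_index pivot by (subst sum.remove[of _ 0]) (auto intro!: sum.neutral)
  also have "cofactor N 0 0 = det (mat_delete N 0 0)" unfolding cofactor_def by simp
  also have "mat_delete N 0 0 = Matrix.mat m m
      (\<lambda>(i, j). A $$ (Suc i, Suc j) - A $$ (Suc i, 0) * A $$ (0, Suc j) / ?\<alpha>)"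
    using N by (intro eq_matI) (auto simp: mat_delete_def N_index)
  finally show ?thesis using N_index[of 0 0] by simp
qed

definition info_det :: "('a \<Rightarrow> 'a \<Rightarrow> real) \<Rightarrow> real \<Rightarrow> 'a list \<Rightarrow> 'a list \<Rightarrow> real" where
  "info_det k sn xs as = det (1\<^sub>m (length as) + (1 / sn\<^sup>2) \<cdot>\<^sub>m gram_mat (post_cov k sn xs) as)"

lemma info_gain_eq_ln_info_det: "info_gain k sn xs as = ln (info_det k sn xs as) / 2"
  unfolding info_gain_def info_det_def by simp

lemma info_det_Nil [simp]: "info_det k sn xs [] = 1"
  unfolding info_det_def by (rule det_dim_zero) (simp add: gram_mat_def)

lemma info_det_Cons:
  assumes X: "finite X" "set xs \<subseteq> X" "psd_kernel X k" "sn > 0" and a: "a \<in> X" and as: "set as \<subseteq> X"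
  shows "info_det k sn xs (a # as) = (1 + post_cov k sn xs a a / sn\<^sup>2) * info_det k sn (xs @ [a]) as"
proof -
  let ?P = "post_cov k sn xs" and ?m = "length as"
  define A where "A = 1\<^sub>m (Suc ?m) + (1 / sn\<^sup>2) \<cdot>\<^sub>m gram_mat ?P (a # as)"
  have A: "A \<in> carrier_mat (Suc ?m) (Suc ?m)" unfolding A_def gram_mat_def by auto
  have A_index: "A $$ (i, j) = (if i = j then 1 else 0) + ?P ((a # as)!i) ((a # as)!j) / sn\<^sup>2"
    if "i < Suc ?m" "j < Suc ?m" for i j
    using that unfolding A_def gram_mat_def by auto
  have s: "0 < ?P a a + sn\<^sup>2" using post_cov_diag_nonneg[OF X a] X(4) by (simp add: add_nonneg_pos)
  have pivot: "A $$ (0, 0) = 1 + ?P a a / sn\<^sup>2" using A_index[of 0 0] by simp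
  also have "\<dots> > 0" using post_cov_diag_nonneg[OF X a] by (simp add: add_pos_nonneg)
  finally have "A $$ (0, 0) \<noteq> 0" by simp
  have "info_det k sn xs (a # as) = det A" unfolding info_det_def A_def by simp
  also have "\<dots> = A $$ (0, 0) *
      det (Matrix.mat ?m ?m (\<lambda>(i, j). A $$ (Suc i, Suc j) - A $$ (Suc i, 0) * A $$ (0, Suc j) / A $$ (0, 0)))"
    by (rule det_schur_complement_first[OF A \<open>A $$ (0, 0) \<noteq> 0\<close>])
  also have "Matrix.mat ?m ?m (\<lambda>(i, j). A $$ (Suc i, Suc j) - A $$ (Suc i, 0) * A $$ (0, Suc j) / A $$ (0, 0))
      = 1\<^sub>m ?m + (1 / sn\<^sup>2) \<cdot>\<^sub>m gram_mat (post_cov k sn (xs @ [a])) as"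
  proof (rule eq_matI)
    fix i j assume "i < dim_row (1\<^sub>m ?m + (1 / sn\<^sup>2) \<cdot>\<^sub>m gram_mat (post_cov k sn (xs @ [a])) as)"
      "j < dim_col (1\<^sub>m ?m + (1 / sn\<^sup>2) \<cdot>\<^sub>m gram_mat (post_cov k sn (xs @ [a])) as)"
    then have i: "i < ?m" and j: "j < ?m" by (auto simp: gram_mat_def)
    have snoc: "post_cov k sn (xs @ [a]) (as!i) (as!j) = ?P (as!i) (as!j) - ?P (as!i) a * ?P a (as!j) / (?P a a + sn\<^sup>2)"
      using post_cov_snoc[OF X a, of "as!i"] s nth_mem[OF i] as by auto
    have "A $$ (Suc i, Suc j) - A $$ (Suc i, 0) * A $$ (0, Suc j) / A $$ (0, 0)
        = (if i = j then 1 else 0) + ?P (as!i) (as!j) / sn\<^sup>2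
          - (?P (as!i) a / sn\<^sup>2) * (?P a (as!j) / sn\<^sup>2) / (1 + ?P a a / sn\<^sup>2)"
      using i j by (simp add: A_index)
    also have "\<dots> = (if i = j then 1 else 0) + post_cov k sn (xs @ [a]) (as!i) (as!j) / sn\<^sup>2"
      using X(4) by (simp add: snoc diff_divide_distrib) (simp add: field_simps)
    finally show "Matrix.mat ?m ?m (\<lambda>(i, j). A $$ (Suc i, Suc j) - A $$ (Suc i, 0) * A $$ (0, Suc j) / A $$ (0, 0)) $$ (i, j)
        = (1\<^sub>m ?m + (1 / sn\<^sup>2) \<cdot>\<^sub>m gram_mat (post_cov k sn (xs @ [a])) as) $$ (i, j)"
      using i j by (simp add: gram_mat_def)
  qed (auto simp: gram_mat_def)
  finally show ?thesis unfolding pivot info_det_def by simp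
qed

lemma info_det_pos:
  assumes X: "finite X" "psd_kernel X k" "sn > 0"
  shows "set xs \<subseteq> X \<Longrightarrow> set as \<subseteq> X \<Longrightarrow> 0 < info_det k sn xs as"
proof (induction as arbitrary: xs)
  case (Cons a as)
  then have "0 < 1 + post_cov k sn xs a a / sn\<^sup>2"
    using post_cov_diag_nonneg[OF X(1) _ X(2,3)] by (simp add: add_pos_nonneg)
  with Cons show ?case by (simp add: info_det_Cons[OF X(1) _ X(2,3)])
qed simp

lemma post_cov_diag_le_info_det_mult:
  assumes X: "finite X" "psd_kernel X k" "sn > 0" and x: "x \<in> X"
  shows "set xs \<subseteq> X \<Longrightarrow> set as \<subseteq> X \<Longrightarrow>
    post_cov k sn xs x x \<le> info_det k sn xs as * post_cov k sn (xs @ as) x x"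
proof (induction as arbitrary: xs)
  case (Cons a as)
  let ?q = "1 + post_cov k sn xs a a / sn\<^sup>2"
  have "0 \<le> ?q" using Cons.prems post_cov_diag_nonneg[OF X(1) _ X(2,3)] by simp
  have "post_cov k sn xs x x \<le> ?q * post_cov k sn (xs @ [a]) x x"
    using Cons.prems by (intro post_cov_diag_le_snoc[OF X(1) _ X(2,3) _ x]) auto
  also have "\<dots> \<le> ?q * (info_det k sn (xs @ [a]) as * post_cov k sn (xs @ [a] @ as) x x)"
    using Cons.IH[of "xs @ [a]"] Cons.prems \<open>0 \<le> ?q\<close> by (intro mult_left_mono) auto
  finally show ?case using Cons.prems by (simp add: info_det_Cons[OF X(1) _ X(2,3)])
qed simp

lemma post_sd_le_exp_info_gain_mult:
  assumes X: "finite X" "psd_kernel X k" "sn > 0" and x: "x \<in> X"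
    and xs: "set xs \<subseteq> X" and as: "set as \<subseteq> X" and C: "info_gain k sn xs as \<le> C"
  shows "post_sd k sn xs x \<le> exp C * post_sd k sn (xs @ as) x"
proof -
  have "info_det k sn xs as = exp (2 * info_gain k sn xs as)"
    using info_det_pos[OF X(1-3) xs as] by (simp add: info_gain_eq_ln_info_det)
  also have "\<dots> \<le> exp (2 * C)" using C by simp
  finally have "info_det k sn xs as \<le> (exp C)\<^sup>2" by (simp add: exp_double)
  moreover have "0 \<le> post_cov k sn (xs @ as) x x"
    using xs as by (intro post_cov_diag_nonneg[OF X(1) _ X(2,3) x]) auto
  ultimately have "post_cov k sn xs x x \<le> (exp C)\<^sup>2 * post_cov k sn (xs @ as) x x"
    using post_cov_diag_le_info_det_mult[OF X x xs as] by (meson mult_right_mono order_trans)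
  then have "sqrt (post_cov k sn xs x x) \<le> sqrt ((exp C)\<^sup>2 * post_cov k sn (xs @ as) x x)"
    by (rule real_sqrt_le_mono)
  then show ?thesis unfolding post_sd_def by (simp add: real_sqrt_mult)
qed

section \<open>Gaussian tail bounds\<close>

lemma normal_density_eq:
  "s > 0 \<Longrightarrow> normal_density m s x = exp (- ((x - m) / s)\<^sup>2 / 2) / (s * sqrt (2 * pi))"
  unfolding normal_density_def by (simp add: real_sqrt_mult power_divide field_simps)

lemma normal_density_has_real_derivative:
  assumes "s > 0"
  shows "(normal_density m s has_real_derivative (- (x - m) / s\<^sup>2 * normal_density m s x)) (at x)"
proof -
  have "((\<lambda>x. exp (- (x - m)\<^sup>2 / (2 * s\<^sup>2))) has_real_derivative
      exp (- (x - m)\<^sup>2 / (2 * s\<^sup>2)) * (- (x - m) / s\<^sup>2)) (at x)"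
    using assms by (auto intro!: derivative_eq_intros simp: field_simps power2_eq_square)
  from DERIV_cmult[OF this, of "1 / sqrt (2 * pi * s\<^sup>2)"] show ?thesis
    unfolding normal_density_def by (simp add: mult_ac)
qed

lemma normal_density_tendsto_0_at_top: "s > 0 \<Longrightarrow> (normal_density m s \<longlongrightarrow> 0) at_top"
  unfolding normal_density_def by real_asymp

text \<open>The two integrals below are bounded by comparing the density with \<open>(x - m) / (c s) \<cdot> density\<close>,
  whose antiderivative is \<open>- (s / c) \<cdot> density\<close>.\<close>

lemma nn_integral_normal_density_tail_le:
  assumes s: "s > 0" and a: "a > 0"
  shows "(\<integral>\<^sup>+x\<in>{m + a * s<..}. normal_density m s x \<partial>lborel) \<le> ennreal (exp (- a\<^sup>2 / 2) / (a * sqrt (2 * pi)))"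
proof -
  define g where "g x = (x - m) / (a * s) * normal_density m s x" for x
  define G where "G = (\<lambda>x. - (s / a) * normal_density m s x)"
  have "(\<integral>\<^sup>+x\<in>{m + a * s<..}. normal_density m s x \<partial>lborel) \<le> (\<integral>\<^sup>+x\<in>{m + a * s..}. ennreal (g x) \<partial>lborel)"
  proof (intro nn_integral_mono)
    fix x
    have "normal_density m s x \<le> g x" if "m + a * s < x"
      using that a s mult_right_mono[of 1 "(x - m) / (a * s)" "normal_density m s x"]
      by (simp add: g_def field_simps)
    then show "ennreal (normal_density m s x) * indicator {m + a * s<..} x \<le> ennreal (g x) * indicator {m + a * s..} x"
      by (auto simp: indicator_def ennreal_leI)
  qed
  also have "\<dots> = ennreal (0 - G (m + a * s))"
  proof (rule nn_integral_FTC_atLeast)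
    show "g \<in> borel_measurable borel" unfolding g_def by measurable
    fix x assume x: "m + a * s \<le> x"
    have "- (s / a) * (- (x - m) / s\<^sup>2 * normal_density m s x) = g x"
      unfolding g_def using s a by (simp add: field_simps power2_eq_square)
    then show "(G has_real_derivative g x) (at x)"
      unfolding G_def using DERIV_cmult[OF normal_density_has_real_derivative[OF s]] by metis
    have "0 \<le> x - m" using x a s by (smt (verit) mult_pos_pos)
    then show "0 \<le> g x" unfolding g_def using a s by simp
  next
    show "(G \<longlongrightarrow> 0) at_top"
      unfolding G_def using tendsto_mult_left[OF normal_density_tendsto_0_at_top[OF s], where c="- (s / a)"]
      by simp
  qed
  also have "0 - G (m + a * s) = exp (- a\<^sup>2 / 2) / (a * sqrt (2 * pi))"
    unfolding G_def normal_density_eq[OF s] using s a by (simp add: field_simps)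
  finally show ?thesis .
qed

lemma nn_integral_normal_density_one_sd_ge:
  assumes s: "s > 0"
  shows "ennreal ((exp (- 1 / 2) - exp (- 2)) / (2 * sqrt (2 * pi))) \<le> (\<integral>\<^sup>+x\<in>{m + s..}. normal_density m s x \<partial>lborel)"
proof -
  define g where "g x = (x - m) / (2 * s) * normal_density m s x" for x
  define G where "G = (\<lambda>x. - (s / 2) * normal_density m s x)"
  have "(exp (- 1 / 2) - exp (- 2)) / (2 * sqrt (2 * pi)) = G (m + 2 * s) - G (m + s)"
    unfolding G_def normal_density_eq[OF s] using s by (simp add: field_simps)
  also have "ennreal \<dots> = (\<integral>\<^sup>+x\<in>{m + s..m + 2 * s}. ennreal (g x) \<partial>lborel)"
  proof (rule nn_integral_FTC_Icc[symmetric])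
    show "g \<in> borel_measurable borel" unfolding g_def by measurable
    fix x assume x: "x \<in> {m + s..m + 2 * s}"
    have "- (s / 2) * (- (x - m) / s\<^sup>2 * normal_density m s x) = g x"
      unfolding g_def using s by (simp add: field_simps power2_eq_square)
    then show "(G has_real_derivative g x) (at x)"
      unfolding G_def using DERIV_cmult[OF normal_density_has_real_derivative[OF s]] by metis
    show "0 \<le> g x" unfolding g_def using x s by simp
  qed (use s in simp)
  also have "\<dots> \<le> (\<integral>\<^sup>+x\<in>{m + s..}. normal_density m s x \<partial>lborel)"
  proof (intro nn_integral_mono)
    fix x
    have "g x \<le> normal_density m s x" if "x \<in> {m + s..m + 2 * s}"
      using that s mult_right_mono[of "(x - m) / (2 * s)" 1 "normal_density m s x"]
      by (simp add: g_def field_simps)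
    then show "ennreal (g x) * indicator {m + s..m + 2 * s} x \<le> ennreal (normal_density m s x) * indicator {m + s..} x"
      by (auto simp: indicator_def ennreal_leI)
  qed
  finally show ?thesis .
qed

lemma normal_rv_measurable: "normal_rv M Y m v \<Longrightarrow> Y \<in> borel_measurable M"
  unfolding normal_rv_def by simp

lemma normal_rv_tail_le:
  assumes M: "prob_space M" and Y: "normal_rv M Y m v" and v: "v \<ge> 0" and a: "a > 0"
  shows "measure M {\<omega>\<in>space M. Y \<omega> > m + a * sqrt v} \<le> exp (- a\<^sup>2 / 2) / (a * sqrt (2 * pi))"
proof (cases "v = 0")
  case True
  then have "AE \<omega> in M. Y \<omega> = m" using Y unfolding normal_rv_def by simp
  then have "measure M {\<omega>\<in>space M. Y \<omega> > m + a * sqrt v} = measure M {}"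
    using True normal_rv_measurable[OF Y] by (intro measure_eq_AE) auto
  then show ?thesis using a by simp
next
  case False
  with v have s: "sqrt v > 0" by simp
  have "distributed M lborel Y (normal_density m (sqrt v))" using Y False unfolding normal_rv_def by simp
  from distributed_emeasure[OF this, of "{m + a * sqrt v<..}"]
  have "emeasure M {\<omega>\<in>space M. Y \<omega> > m + a * sqrt v}
      = (\<integral>\<^sup>+x\<in>{m + a * sqrt v<..}. normal_density m (sqrt v) x \<partial>lborel)"
    by (simp add: vimage_def Int_def conj_commute)
  also have "\<dots> \<le> ennreal (exp (- a\<^sup>2 / 2) / (a * sqrt (2 * pi)))"
    by (rule nn_integral_normal_density_tail_le[OF s a])
  finally show ?thesis using a by (simp add: finite_measure.emeasure_eq_measure[OF prob_space.finite_measure[OF M]])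
qed

lemma normal_rv_one_sd_tail_ge:
  assumes M: "prob_space M" and Y: "normal_rv M Y m v" and v: "v \<ge> 0"
  shows "(exp (- 1 / 2) - exp (- 2)) / (2 * sqrt (2 * pi)) \<le> measure M {\<omega>\<in>space M. Y \<omega> \<ge> m + sqrt v}"
proof (cases "v = 0")
  case True
  have "exp (- 1 / 2) - exp (- 2) \<le> (1::real)"
    using exp_gt_zero[of "- 2 :: real"] exp_le_one_iff[of "- 1 / 2 :: real"] by linarith
  moreover have "1 \<le> sqrt (2 * pi)" using pi_gt3 by simp
  ultimately have "exp (- 1 / 2) - exp (- 2) \<le> 2 * sqrt (2 * pi)" by linarith
  then have "(exp (- 1 / 2) - exp (- 2)) / (2 * sqrt (2 * pi)) \<le> 1"
    by (simp add: divide_le_eq)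
  moreover from True have "AE \<omega> in M. Y \<omega> = m" using Y unfolding normal_rv_def by simp
  then have "measure M {\<omega>\<in>space M. Y \<omega> \<ge> m + sqrt v} = measure M (space M)"
    using True normal_rv_measurable[OF Y] by (intro measure_eq_AE) auto
  ultimately show ?thesis using prob_space.prob_space[OF M] by simp
next
  case False
  with v have s: "sqrt v > 0" by simp
  have "distributed M lborel Y (normal_density m (sqrt v))" using Y False unfolding normal_rv_def by simp
  from distributed_emeasure[OF this, of "{m + sqrt v..}"]
  have "emeasure M {\<omega>\<in>space M. Y \<omega> \<ge> m + sqrt v} = (\<integral>\<^sup>+x\<in>{m + sqrt v..}. normal_density m (sqrt v) x \<partial>lborel)"
    by (simp add: vimage_def Int_def conj_commute)
  with nn_integral_normal_density_one_sd_ge[OF s, of m]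
  have "ennreal ((exp (- 1 / 2) - exp (- 2)) / (2 * sqrt (2 * pi))) \<le> ennreal (measure M {\<omega>\<in>space M. Y \<omega> \<ge> m + sqrt v})"
    by (simp add: finite_measure.emeasure_eq_measure[OF prob_space.finite_measure[OF M]])
  then show ?thesis by (simp add: ennreal_le_iff)
qed

lemma exp_numeric_bounds:
  shows "9/4 \<le> exp (1::real)" and "4/7 \<le> exp (- 1 / 2 :: real)" and "exp (- 2 :: real) \<le> 16/81"
    and "exp (3/2 :: real) \<le> 8"
proof -
  have lower: "3/2 \<le> exp (1/2 :: real)" using exp_ge_add_one_self[of "1/2 :: real"] by simp
  have upper: "exp (1/2 :: real) \<le> 7/4" using exp_bound[of "1/2 :: real"] by (simp add: power2_eq_square)
  have e: "exp (1::real) = exp (1/2) * exp (1/2)" by (simp add: mult_exp_exp)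
  show e_ge: "9/4 \<le> exp (1::real)" unfolding e using mult_mono[OF lower lower] by simp
  show "4/7 \<le> exp (- 1 / 2 :: real)"
    using upper by (simp add: exp_minus inverse_eq_divide field_simps)
  have "81/16 \<le> exp (1::real) * exp 1" using mult_mono[OF e_ge e_ge] by simp
  then show "exp (- 2 :: real) \<le> 16/81"
    by (simp add: exp_minus inverse_eq_divide mult_exp_exp field_simps)
  have "exp (3/2 :: real) = exp 1 * exp (1/2)" by (simp add: mult_exp_exp)
  also have "\<dots> \<le> 3 * (7/4)" using mult_mono[OF exp_le upper] by simp
  finally show "exp (3/2 :: real) \<le> 8" by simp
qed

lemma ts_beta_pos:
  assumes "1 \<le> N" "1 \<le> t" "0 < \<delta>" "\<delta> < 1"
  shows "0 < ts_beta N \<delta> t"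
proof -
  have "1 \<le> (real t)\<^sup>2 * real N"
    using assms(1,2) mult_mono[of 1 "(real t)\<^sup>2" 1 "real N"] one_le_power[of "real t" 2] by simp
  have "3 * \<delta> < pi\<^sup>2" using power_strict_mono[of 3 pi 2] pi_gt3 assms(4) by simp
  also have "\<dots> \<le> pi\<^sup>2 * ((real t)\<^sup>2 * real N)"
    using mult_left_mono[OF \<open>1 \<le> (real t)\<^sup>2 * real N\<close>, of "pi\<^sup>2"] by simp
  finally have "1 < pi\<^sup>2 * (real t)\<^sup>2 * real N / (3 * \<delta>)"
    using assms(3) by (simp add: mult.assoc)
  then show ?thesis unfolding ts_beta_def by simp
qed

lemma ts_c_nonneg:
  assumes "1 \<le> N" "1 \<le> t" "0 < \<delta>" "\<delta> < 1"
  shows "0 \<le> ts_c N \<delta> t"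
proof -
  have "1 \<le> real N * (real t)\<^sup>2"
    using assms(1,2) mult_mono[of 1 "real N" 1 "(real t)\<^sup>2"] one_le_power[of "real t" 2] by simp
  then show ?thesis using ts_beta_pos[OF assms] unfolding ts_c_def by simp
qed

lemma deviation_threshold_bounds:
  fixes N t :: nat
  assumes N: "2 \<le> N" and t: "2 \<le> t"
  defines "a \<equiv> sqrt (2 * ln (real N * (real t)\<^sup>2))"
  shows "17/10 \<le> a"
    and "2 * real N * (exp (- a\<^sup>2 / 2) / (a * sqrt (2 * pi))) \<le> 1 / (real t)\<^sup>2"
    and "real N * (exp (- a\<^sup>2 / 2) / (a * sqrt (2 * pi))) \<le> 1 / (4 * a * sqrt (2 * pi))"
proof -
  have t4: "4 \<le> (real t)\<^sup>2" using power_mono[of 2 "real t" 2] t by simp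
  with N have "8 \<le> real N * (real t)\<^sup>2" using mult_mono[of 2 "real N" 4 "(real t)\<^sup>2"] by simp
  then have ln: "3/2 \<le> ln (real N * (real t)\<^sup>2)" using exp_numeric_bounds(4) by (subst ln_ge_iff) auto
  have "sqrt ((17/10)\<^sup>2) \<le> a" unfolding a_def using ln by (intro real_sqrt_le_mono) (simp add: power2_eq_square)
  then show a: "17/10 \<le> a" by simp
  have "exp (- a\<^sup>2 / 2) = exp (- ln (real N * (real t)\<^sup>2))" unfolding a_def using ln by simp
  also have "\<dots> = 1 / (real N * (real t)\<^sup>2)" using N t by (simp add: exp_minus inverse_eq_divide)
  finally have NT: "real N * (exp (- a\<^sup>2 / 2) / (a * sqrt (2 * pi))) = 1 / (a * sqrt (2 * pi)) * (1 / (real t)\<^sup>2)"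
    using N by simp
  have sqrt_2pi: "2 \<le> sqrt (2 * pi)"
    using real_sqrt_le_mono[of "2\<^sup>2" "2 * pi"] pi_gt3 by simp
  then have "2 \<le> a * sqrt (2 * pi)" using a mult_mono[of 1 a 2 "sqrt (2 * pi)"] by simp
  then have "2 * (1 / (a * sqrt (2 * pi))) \<le> 1" by simp
  have "2 * real N * (exp (- a\<^sup>2 / 2) / (a * sqrt (2 * pi))) = 2 * (1 / (a * sqrt (2 * pi))) * (1 / (real t)\<^sup>2)"
    by (simp only: mult.assoc NT)
  also have "\<dots> \<le> 1 / (real t)\<^sup>2"
    using mult_right_mono[OF \<open>2 * (1 / (a * sqrt (2 * pi))) \<le> 1\<close>, of "1 / (real t)\<^sup>2"] by simp
  finally show "2 * real N * (exp (- a\<^sup>2 / 2) / (a * sqrt (2 * pi))) \<le> 1 / (real t)\<^sup>2" .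
  have "1 / (real t)\<^sup>2 \<le> 1 / 4" using t4 t by (intro divide_left_mono) auto
  then have "1 / (a * sqrt (2 * pi)) * (1 / (real t)\<^sup>2) \<le> 1 / (a * sqrt (2 * pi)) * (1 / 4)"
    using a sqrt_2pi by (intro mult_left_mono) auto
  then show "real N * (exp (- a\<^sup>2 / 2) / (a * sqrt (2 * pi))) \<le> 1 / (4 * a * sqrt (2 * pi))"
    unfolding NT by (simp add: mult_ac)
qed

lemma ts_p_div_5_le_tail_margin:
  fixes a :: real
  assumes a: "17/10 \<le> a"
  shows "ts_p / 5 \<le> (exp (- 1 / 2) - exp (- 2)) / (2 * sqrt (2 * pi)) - 1 / (4 * a * sqrt (2 * pi))"
proof -
  have "sqrt 2 \<le> sqrt ((71/50 :: real)\<^sup>2)" by (rule real_sqrt_le_mono) (simp add: power2_eq_square)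
  then have sqrt2: "sqrt 2 \<le> (71/50 :: real)" by simp
  have sqrt_2pi: "sqrt (2 * pi) = sqrt 2 * sqrt pi" by (simp add: real_sqrt_mult)
  have "ts_p / 5 = (1 / sqrt pi) * (1 / (20 * exp 1))" unfolding ts_p_def by (simp add: field_simps)
  also have "\<dots> \<le> (1 / sqrt pi) * (1 / (20 * (9/4)))"
    using exp_numeric_bounds(1) by (intro mult_left_mono divide_left_mono) auto
  also have "\<dots> \<le> (1 / sqrt pi) * ((4/7 - 16/81) / 2 - 10 / 68) / (71/50)"
    by (simp add: field_simps)
  also have "\<dots> \<le> (1 / sqrt pi) * ((4/7 - 16/81) / 2 - 10 / 68) / sqrt 2"
    using sqrt2 by (intro divide_left_mono mult_nonneg_nonneg) auto
  also have "\<dots> = (4/7 - 16/81) / (2 * sqrt (2 * pi)) - 1 / (4 * (17/10) * sqrt (2 * pi))"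
    unfolding sqrt_2pi by (simp add: field_simps)
  also have "\<dots> \<le> (exp (- 1 / 2) - exp (- 2)) / (2 * sqrt (2 * pi)) - 1 / (4 * a * sqrt (2 * pi))"
  proof -
    have "(4/7 - 16/81) / (2 * sqrt (2 * pi)) \<le> (exp (- 1 / 2) - exp (- 2)) / (2 * sqrt (2 * pi))"
      using exp_numeric_bounds(2,3) by (intro divide_right_mono) auto
    moreover have "1 / (4 * a * sqrt (2 * pi)) \<le> 1 / (4 * (17/10) * sqrt (2 * pi))"
      using a by (intro divide_left_mono mult_right_mono mult_pos_pos) auto
    ultimately show ?thesis by linarith
  qed
  finally show ?thesis .
qed

lemma gaussian_field_marginal:
  assumes "gaussian_field M F X m K" "finite X" "x \<in> X"
  shows "normal_rv M (\<lambda>\<omega>. c * F \<omega> x) (c * m x) (c\<^sup>2 * K x x)"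
proof -
  let ?e = "\<lambda>y. if y = x then c else 0"
  have "normal_rv M (\<lambda>\<omega>. \<Sum>y\<in>X. ?e y * F \<omega> y) (\<Sum>y\<in>X. ?e y * m y) (\<Sum>y\<in>X. \<Sum>y'\<in>X. ?e y * ?e y' * K y y')"
    using assms(1) unfolding gaussian_field_def by (rule spec)
  moreover have "(\<Sum>y\<in>X. ?e y * g y) = c * g x" for g :: "_ \<Rightarrow> real"
    using assms(2,3) by (simp add: if_distrib[where f="\<lambda>u. u * _"] sum.delta cong: if_cong)
  ultimately show ?thesis using sum_sum_indicator_mult[OF assms(2,3)] by simp
qed

lemma integrable_comp_finite_range:
  fixes h :: "'a \<Rightarrow> real"
  assumes "finite_measure M" "finite X" "Y \<in> measurable M (count_space UNIV)" "\<And>\<omega>. \<omega> \<in> space M \<Longrightarrow> Y \<omega> \<in> X"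
  shows "integrable M (\<lambda>\<omega>. h (Y \<omega>))"
proof (rule finite_measure.integrable_const_bound[OF assms(1), where B="\<Sum>x\<in>X. \<bar>h x\<bar>"])
  show "AE \<omega> in M. norm (h (Y \<omega>)) \<le> (\<Sum>x\<in>X. \<bar>h x\<bar>)"
    using assms(2,4) by (auto intro!: AE_I2 member_le_sum[where f="\<lambda>x. \<bar>h x\<bar>"])
  show "(\<lambda>\<omega>. h (Y \<omega>)) \<in> borel_measurable M"
    using assms(3) by (rule measurable_compose) simp
qed

section \<open>One round of Thompson sampling\<close>

text \<open>In the notation of the paper, F is f_t, \<mu> is \<mu>_fb[t] and K is \<beta>_t^2 times the posterior
  covariance given the first fb[t] observations, so that sd is \<beta>_t \<sigma>_fb[t].\<close>

locale thompson_step = prob_space M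
  for M :: "'w measure" and X :: "'a set" and f \<mu> :: "'a \<Rightarrow> real" and K :: "'a \<Rightarrow> 'a \<Rightarrow> real"
    and F :: "'w \<Rightarrow> 'a \<Rightarrow> real" and xt :: "'w \<Rightarrow> 'a" and xstar :: 'a +
  assumes finite_X: "finite X"
    and field: "gaussian_field M F X \<mu> K"
    and K_diag_nonneg: "x \<in> X \<Longrightarrow> 0 \<le> K x x"
    and mean_close: "x \<in> X \<Longrightarrow> \<bar>\<mu> x - f x\<bar> \<le> sqrt (K x x)"
    and xstar: "xstar \<in> X" "x \<in> X \<Longrightarrow> f x \<le> f xstar"
    and xt_measurable: "xt \<in> measurable M (count_space UNIV)"
    and xt_in_X: "\<omega> \<in> space M \<Longrightarrow> xt \<omega> \<in> X"
    and xt_argmax: "\<omega> \<in> space M \<Longrightarrow> x \<in> X \<Longrightarrow> F \<omega> x \<le> F \<omega> (xt \<omega>)"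
begin

abbreviation sd :: "'a \<Rightarrow> real" where "sd x \<equiv> sqrt (K x x)"

abbreviation regret :: "'a \<Rightarrow> real" where "regret x \<equiv> f xstar - f x"

definition above :: "real \<Rightarrow> 'a \<Rightarrow> 'w set" where
  "above a x = {\<omega>\<in>space M. F \<omega> x > \<mu> x + a * sd x}"

definition below :: "real \<Rightarrow> 'a \<Rightarrow> 'w set" where
  "below a x = {\<omega>\<in>space M. F \<omega> x < \<mu> x - a * sd x}"

definition deviates :: "real \<Rightarrow> 'w set" where
  "deviates a = (\<Union>x\<in>X. above a x \<union> below a x)"

definition unsaturated :: "real \<Rightarrow> 'a set" where
  "unsaturated a = {x\<in>X. regret x \<le> (1 + a) * sd x}"

lemma integrable_xt: "integrable M (\<lambda>\<omega>. h (xt \<omega>) :: real)"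
  by (rule integrable_comp_finite_range[OF finite_measure_axioms finite_X xt_measurable xt_in_X])

lemma marginal: "x \<in> X \<Longrightarrow> normal_rv M (\<lambda>\<omega>. c * F \<omega> x) (c * \<mu> x) (c\<^sup>2 * K x x)"
  by (rule gaussian_field_marginal[OF field finite_X])

lemma F_measurable: "x \<in> X \<Longrightarrow> (\<lambda>\<omega>. F \<omega> x) \<in> borel_measurable M"
  using normal_rv_measurable[OF marginal[of x 1]] by simp

lemma above_sets: "x \<in> X \<Longrightarrow> above a x \<in> sets M"
proof -
  have "above a x = (\<lambda>\<omega>. F \<omega> x) -` {\<mu> x + a * sd x<..} \<inter> space M" unfolding above_def by auto
  then show "x \<in> X \<Longrightarrow> above a x \<in> sets M" using measurable_sets[OF F_measurable] by simp
qed

lemma below_sets: "x \<in> X \<Longrightarrow> below a x \<in> sets M"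
proof -
  have "below a x = (\<lambda>\<omega>. F \<omega> x) -` {..<\<mu> x - a * sd x} \<inter> space M" unfolding below_def by auto
  then show "x \<in> X \<Longrightarrow> below a x \<in> sets M" using measurable_sets[OF F_measurable] by simp
qed

lemma deviates_sets: "deviates a \<in> sets M"
  unfolding deviates_def using above_sets below_sets finite_X by auto

lemma prob_above_le:
  assumes "x \<in> X" "a > 0"
  shows "prob (above a x) \<le> exp (- a\<^sup>2 / 2) / (a * sqrt (2 * pi))"
  using normal_rv_tail_le[OF prob_space_axioms marginal[OF assms(1), of 1] _ assms(2)] K_diag_nonneg[OF assms(1)]
  unfolding above_def by simp

lemma prob_below_le:
  assumes "x \<in> X" "a > 0"
  shows "prob (below a x) \<le> exp (- a\<^sup>2 / 2) / (a * sqrt (2 * pi))"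
proof -
  have "below a x = {\<omega>\<in>space M. - F \<omega> x > - \<mu> x + a * sqrt (K x x)}"
    unfolding below_def by auto
  then show ?thesis
    using normal_rv_tail_le[OF prob_space_axioms marginal[OF assms(1), of "- 1"] _ assms(2)] K_diag_nonneg[OF assms(1)]
    by simp
qed

lemma prob_deviates_le:
  assumes "a > 0"
  shows "prob (deviates a) \<le> 2 * real (card X) * (exp (- a\<^sup>2 / 2) / (a * sqrt (2 * pi)))"
proof -
  have "prob (deviates a) \<le> (\<Sum>x\<in>X. prob (above a x \<union> below a x))"
    unfolding deviates_def using above_sets below_sets finite_X
    by (intro finite_measure_subadditive_finite) auto
  also have "\<dots> \<le> (\<Sum>x\<in>X. 2 * (exp (- a\<^sup>2 / 2) / (a * sqrt (2 * pi))))"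
  proof (rule sum_mono)
    fix x assume x: "x \<in> X"
    have "prob (above a x \<union> below a x) \<le> prob (above a x) + prob (below a x)"
      using above_sets[OF x] below_sets[OF x] by (rule measure_Un_le)
    then show "prob (above a x \<union> below a x) \<le> 2 * (exp (- a\<^sup>2 / 2) / (a * sqrt (2 * pi)))"
      using prob_above_le[OF x assms] prob_below_le[OF x assms] by linarith
  qed
  finally show ?thesis by (simp add: mult_ac)
qed

lemma xstar_unsaturated: "a \<ge> 0 \<Longrightarrow> xstar \<in> unsaturated a"
  unfolding unsaturated_def using xstar(1) K_diag_nonneg by simp

text \<open>With constant probability the sample at xstar is at least one standard deviation above its
  mean; then the maximiser xt can only be saturated if it is itself sampled above its deviation
  band.\<close>

lemma xt_unsaturated_if_optimistic:
  assumes \<omega>: "\<omega> \<in> space M" and optimistic: "\<mu> xstar + sd xstar \<le> F \<omega> xstar"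
    and not_above: "\<omega> \<notin> above a (xt \<omega>)"
  shows "xt \<omega> \<in> unsaturated a"
proof -
  have "F \<omega> (xt \<omega>) \<le> \<mu> (xt \<omega>) + a * sd (xt \<omega>)" using \<omega> not_above unfolding above_def by auto
  moreover have "F \<omega> xstar \<le> F \<omega> (xt \<omega>)" using xt_argmax[OF \<omega> xstar(1)] .
  moreover have "(1 + a) * sd (xt \<omega>) = sd (xt \<omega>) + a * sd (xt \<omega>)" by (simp add: algebra_simps)
  ultimately have "regret (xt \<omega>) \<le> (1 + a) * sd (xt \<omega>)"
    using optimistic mean_close[OF xstar(1)] mean_close[OF xt_in_X[OF \<omega>]] unfolding abs_le_iff by linarith
  then show ?thesis unfolding unsaturated_def using xt_in_X[OF \<omega>] by simp
qed

lemma prob_xt_unsaturated_ge: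
  assumes "a > 0"
  shows "(exp (- 1 / 2) - exp (- 2)) / (2 * sqrt (2 * pi)) - card X * (exp (- a\<^sup>2 / 2) / (a * sqrt (2 * pi)))
    \<le> prob {\<omega>\<in>space M. xt \<omega> \<in> unsaturated a}"
proof -
  define optimistic where "optimistic = {\<omega>\<in>space M. \<mu> xstar + sd xstar \<le> F \<omega> xstar}"
  define high where "high = (\<Union>x\<in>X - unsaturated a. above a x)"
  have "optimistic = (\<lambda>\<omega>. F \<omega> xstar) -` {\<mu> xstar + sd xstar..} \<inter> space M"
    unfolding optimistic_def by auto
  moreover have "{\<omega>\<in>space M. xt \<omega> \<in> unsaturated a} = xt -` unsaturated a \<inter> space M" by auto
  ultimately have sets: "optimistic \<in> sets M" "high \<in> sets M" "{\<omega>\<in>space M. xt \<omega> \<in> unsaturated a} \<in> sets M"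
    unfolding high_def using measurable_sets[OF F_measurable[OF xstar(1)]] measurable_sets[OF xt_measurable]
      above_sets finite_X by auto
  have "optimistic - high \<subseteq> {\<omega>\<in>space M. xt \<omega> \<in> unsaturated a}"
    using xt_unsaturated_if_optimistic xt_in_X unfolding optimistic_def high_def by blast
  then have "prob (optimistic - high) \<le> prob {\<omega>\<in>space M. xt \<omega> \<in> unsaturated a}"
    using sets by (intro finite_measure_mono) auto
  moreover have "prob optimistic - prob high \<le> prob (optimistic - high)"
    using sets finite_measure_Diff'[of optimistic high] finite_measure_mono[of "optimistic \<inter> high" high] by auto
  moreover have "(exp (- 1 / 2) - exp (- 2)) / (2 * sqrt (2 * pi)) \<le> prob optimistic"
    using normal_rv_one_sd_tail_ge[OF prob_space_axioms marginal[OF xstar(1), of 1]] K_diag_nonneg[OF xstar(1)]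
    unfolding optimistic_def by simp
  moreover have "prob high \<le> card X * (exp (- a\<^sup>2 / 2) / (a * sqrt (2 * pi)))"
  proof -
    have "prob high \<le> (\<Sum>x\<in>X - unsaturated a. prob (above a x))"
      unfolding high_def using above_sets finite_X by (intro finite_measure_subadditive_finite) auto
    also have "\<dots> \<le> card (X - unsaturated a) * (exp (- a\<^sup>2 / 2) / (a * sqrt (2 * pi)))"
      using prob_above_le[OF _ assms] by (intro sum_bounded_above) auto
    also have "\<dots> \<le> card X * (exp (- a\<^sup>2 / 2) / (a * sqrt (2 * pi)))"
      using card_mono[OF finite_X, of "X - unsaturated a"] assms by (intro mult_right_mono) auto
    finally show ?thesis .
  qed
  ultimately show ?thesis by linarith
qed

lemma regret_le_indicator_deviates:
  assumes \<omega>: "\<omega> \<in> space M" and x: "x \<in> unsaturated a" and a: "a \<ge> 0"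
    and B': "\<And>x. x \<in> X \<Longrightarrow> \<bar>f x\<bar> \<le> B'"
  shows "regret (xt \<omega>) \<le> 2 * (1 + a) * sd x + (1 + a) * sd (xt \<omega>) + 2 * B' * indicator (deviates a) \<omega>"
proof (cases "\<omega> \<in> deviates a")
  case True
  have "regret (xt \<omega>) \<le> 2 * B'" using B'[OF xstar(1)] B'[OF xt_in_X[OF \<omega>]] by linarith
  moreover have "0 \<le> 2 * (1 + a) * sd x + (1 + a) * sd (xt \<omega>)"
    using a x K_diag_nonneg xt_in_X[OF \<omega>] unfolding unsaturated_def by simp
  ultimately show ?thesis using True by simp
next
  case False
  then have no_penalty: "2 * B' * indicator (deviates a) \<omega> = 0" by simp
  have x_X: "x \<in> X" using x unfolding unsaturated_def by simp
  have "F \<omega> (xt \<omega>) \<le> \<mu> (xt \<omega>) + a * sd (xt \<omega>)" "F \<omega> x \<ge> \<mu> x - a * sd x"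
    using False \<omega> xt_in_X[OF \<omega>] x_X unfolding deviates_def above_def below_def by auto
  moreover have "regret x \<le> (1 + a) * sd x" using x unfolding unsaturated_def by simp
  moreover have "(1 + a) * sd y = sd y + a * sd y" for y by (simp add: algebra_simps)
  note this[of x] this[of "xt \<omega>"]
  moreover have "2 * (1 + a) * sd x = 2 * sd x + 2 * (a * sd x)" by (simp add: algebra_simps)
  ultimately show ?thesis
    using no_penalty xt_argmax[OF \<omega> x_X] mean_close[OF x_X] mean_close[OF xt_in_X[OF \<omega>]]
    unfolding abs_le_iff by linarith
qed

lemma exists_unsaturated_sd_le:
  assumes "a \<ge> 0"
  obtains xb where "xb \<in> unsaturated a"
    and "sd xb * prob {\<omega>\<in>space M. xt \<omega> \<in> unsaturated a} \<le> (LINT \<omega>|M. sd (xt \<omega>))"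
proof
  let ?U = "{\<omega>\<in>space M. xt \<omega> \<in> unsaturated a}"
  have U: "finite (unsaturated a)" "unsaturated a \<noteq> {}"
    using finite_X xstar_unsaturated[OF assms] unfolding unsaturated_def by auto
  define xb where "xb = arg_min_on sd (unsaturated a)"
  show xb: "xb \<in> unsaturated a"
    using arg_min_if_finite(1)[OF U, of sd] unfolding xb_def .
  have xb_min: "sd xb \<le> sd x" if "x \<in> unsaturated a" for x
    using arg_min_if_finite(2)[OF U, of sd] that unfolding xb_def by (auto simp: not_less)
  have U_sets: "?U \<in> sets M"
    using measurable_sets[OF xt_measurable, of "unsaturated a"] by (simp add: vimage_def Int_def conj_commute)
  then have "integrable M (indicator ?U :: 'w \<Rightarrow> real)"
    by (intro integrable_real_indicator) (auto simp: emeasure_eq_measure)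
  then have "(LINT \<omega>|M. sd xb * indicator ?U \<omega>) \<le> (LINT \<omega>|M. sd (xt \<omega>))"
    using xb_min K_diag_nonneg xt_in_X
    by (intro integral_mono integrable_xt integrable_mult_right[OF \<open>integrable M (indicator ?U)\<close>])
      (auto simp: indicator_def)
  then show "sd xb * prob ?U \<le> (LINT \<omega>|M. sd (xt \<omega>))" using U_sets by simp
qed

lemma expected_regret_le:
  assumes a: "a \<ge> 0" and q: "0 < q" "q \<le> prob {\<omega>\<in>space M. xt \<omega> \<in> unsaturated a}"
    and B': "\<And>x. x \<in> X \<Longrightarrow> \<bar>f x\<bar> \<le> B'"
  shows "(LINT \<omega>|M. regret (xt \<omega>))
    \<le> (1 + a) * (1 + 2 / q) * (LINT \<omega>|M. sd (xt \<omega>)) + 2 * B' * prob (deviates a)"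
proof -
  obtain xb where xb: "xb \<in> unsaturated a"
    and "sd xb * prob {\<omega>\<in>space M. xt \<omega> \<in> unsaturated a} \<le> (LINT \<omega>|M. sd (xt \<omega>))"
    using exists_unsaturated_sd_le[OF a] .
  moreover have "0 \<le> sd xb" using xb K_diag_nonneg unfolding unsaturated_def by simp
  ultimately have "sd xb * q \<le> (LINT \<omega>|M. sd (xt \<omega>))"
    using mult_left_mono[OF q(2), of "sd xb"] by linarith
  then have sd_xb: "sd xb \<le> (LINT \<omega>|M. sd (xt \<omega>)) / q" using q by (simp add: field_simps)
  have "(LINT \<omega>|M. regret (xt \<omega>))
      \<le> (LINT \<omega>|M. 2 * (1 + a) * sd xb + (1 + a) * sd (xt \<omega>) + 2 * B' * indicator (deviates a) \<omega>)"
    using deviates_sets regret_le_indicator_deviates[OF _ xb a B']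
    by (intro integral_mono integrable_xt Bochner_Integration.integrable_add integrable_mult_right
        integrable_real_indicator) (auto simp: emeasure_eq_measure)
  also have "\<dots> = 2 * (1 + a) * sd xb + (1 + a) * (LINT \<omega>|M. sd (xt \<omega>)) + 2 * B' * prob (deviates a)"
    using deviates_sets integrable_xt[of sd] prob_space
    by (simp add: emeasure_eq_measure integrable_real_indicator)
  also have "\<dots> \<le> (1 + a) * (1 + 2 / q) * (LINT \<omega>|M. sd (xt \<omega>)) + 2 * B' * prob (deviates a)"
    using mult_left_mono[OF sd_xb, of "2 * (1 + a)"] a by (simp add: field_simps)
  finally show ?thesis .
qed

lemma expected_regret_bound:
  assumes t: "1 \<le> t" and B': "\<And>x. x \<in> X \<Longrightarrow> \<bar>f x\<bar> \<le> B'"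
  defines "a \<equiv> sqrt (2 * ln (real (card X) * (real t)\<^sup>2))"
  shows "(LINT \<omega>|M. regret (xt \<omega>))
    \<le> (1 + a) * (1 + 10 / ts_p) * (LINT \<omega>|M. sd (xt \<omega>)) + 2 * B' / (real t)\<^sup>2"
proof -
  have card_X: "1 \<le> card X" using finite_X xstar(1) by (simp add: Suc_le_eq card_gt_0_iff) blast
  then have "1 \<le> real (card X) * (real t)\<^sup>2"
    using mult_mono[of 1 "real (card X)" 1 "(real t)\<^sup>2"] one_le_power[of "real t" 2] t by simp
  then have a: "0 \<le> a" unfolding a_def by simp
  have B'_nonneg: "0 \<le> B'" using B'[OF xstar(1)] by simp
  have "0 \<le> (LINT \<omega>|M. sd (xt \<omega>))"
    using K_diag_nonneg xt_in_X by (intro integral_nonneg_AE AE_I2) simp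
  then have first_nonneg: "0 \<le> (1 + a) * (1 + 10 / ts_p) * (LINT \<omega>|M. sd (xt \<omega>))"
    using a by (simp add: ts_p_def)
  consider "t = 1" | "card X = 1" | "2 \<le> t" "2 \<le> card X" using t card_X by linarith
  then show ?thesis
  proof cases
    case 1
    have "regret (xt \<omega>) \<le> 2 * B'" if "\<omega> \<in> space M" for \<omega>
      using B'[OF xstar(1)] B'[OF xt_in_X[OF that]] by linarith
    then have "(LINT \<omega>|M. regret (xt \<omega>)) \<le> (LINT \<omega>|M. 2 * B')"
      by (intro integral_mono integrable_xt) auto
    then show ?thesis using 1 first_nonneg prob_space by simp
  next
    case 2
    then have "X = {xstar}" using xstar(1) by (metis card_1_singletonE singletonD)
    then have "(LINT \<omega>|M. regret (xt \<omega>)) = 0" using xt_in_X by (simp add: integral_eq_zero_AE)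
    then show ?thesis using first_nonneg B'_nonneg by simp
  next
    case 3
    note bounds = deviation_threshold_bounds[OF 3(2,1), folded a_def]
    have a_pos: "0 < a" using bounds(1) by simp
    have "ts_p / 5 \<le> prob {\<omega>\<in>space M. xt \<omega> \<in> unsaturated a}"
      using ts_p_div_5_le_tail_margin[OF bounds(1)] bounds(3) prob_xt_unsaturated_ge[OF a_pos] by linarith
    from expected_regret_le[OF a _ this B'] have
      "(LINT \<omega>|M. regret (xt \<omega>)) \<le> (1 + a) * (1 + 10 / ts_p) * (LINT \<omega>|M. sd (xt \<omega>)) + 2 * B' * prob (deviates a)"
      by (simp add: ts_p_def)
    moreover have "2 * B' * prob (deviates a) \<le> 2 * B' / (real t)\<^sup>2"
      using mult_left_mono[OF order_trans[OF prob_deviates_le[OF a_pos] bounds(2)], of "2 * B'"] B'_nonneg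
      by simp
    ultimately show ?thesis by linarith
  qed
qed

end

lemma thompson_step_posterior:
  assumes M: "prob_space M" and X: "finite X" "set xs \<subseteq> X" "psd_kernel X k" "sn > 0" and \<beta>: "0 < \<beta>"
    and field: "gaussian_field M F X (post_mean k sn xs ys) (\<lambda>x x'. \<beta>\<^sup>2 * post_cov k sn xs x x')"
    and mean_close: "\<forall>x\<in>X. \<bar>post_mean k sn xs ys x - f x\<bar> \<le> \<beta> * post_sd k sn xs x"
    and xstar: "xstar \<in> X" "\<forall>x\<in>X. f x \<le> f xstar"
    and xt: "xt \<in> measurable M (count_space UNIV)" "\<forall>\<omega>\<in>space M. xt \<omega> \<in> X \<and> (\<forall>x\<in>X. F \<omega> x \<le> F \<omega> (xt \<omega>))"
  shows "thompson_step M X f (post_mean k sn xs ys) (\<lambda>x x'. \<beta>\<^sup>2 * post_cov k sn xs x x') F xt xstar"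
proof (rule thompson_step.intro[OF M], unfold_locales)
  have sd_eq: "sqrt (\<beta>\<^sup>2 * post_cov k sn xs x x) = \<beta> * post_sd k sn xs x" for x
    using \<beta> by (simp add: post_sd_def real_sqrt_mult)
  show "\<bar>post_mean k sn xs ys x - f x\<bar> \<le> sqrt (\<beta>\<^sup>2 * post_cov k sn xs x x)" if "x \<in> X" for x
    using mean_close that by (simp add: sd_eq)
  show "0 \<le> \<beta>\<^sup>2 * post_cov k sn xs x x" if "x \<in> X" for x
    using post_cov_diag_nonneg[OF X that] by simp
  show "xt \<omega> \<in> X" if "\<omega> \<in> space M" for \<omega> using xt(2) that by simp
  show "F \<omega> x \<le> F \<omega> (xt \<omega>)" if "\<omega> \<in> space M" "x \<in> X" for \<omega> x using xt(2) that by simp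
qed (use X field xstar xt in simp_all)

theorem lemma6:
  fixes X :: "'a::euclidean_space set" and k :: "'a \<Rightarrow> 'a \<Rightarrow> real" and f :: "'a \<Rightarrow> real"
    and B' sn \<delta> C :: real and B t fb :: nat
    and xs :: "'a list" and ys :: "real list" and xstar :: 'a
    and M :: "'w measure" and ft :: "'w \<Rightarrow> 'a \<Rightarrow> real" and xt :: "'w \<Rightarrow> 'a"
  assumes X_fin: "finite X" and X_ne: "X \<noteq> {}" and X_ball: "X \<subseteq> cball 0 1"
    and kernel: "psd_kernel X k"
    and noise: "sn > 0"
    and f_bound: "\<forall>x\<in>X. \<bar>f x\<bar> \<le> B'"
    and xstar: "xstar \<in> X" "\<forall>x\<in>X. f x \<le> f xstar"
    and delta: "0 < \<delta>" "\<delta> < 1"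
    and t: "t \<ge> 1" and B: "B \<ge> 1"
    and hist_x: "length xs = t - 1" "set xs \<subseteq> X"
    and fb: "fb \<le> t - 1" "t - fb \<le> B"
    and hist_y: "length ys = fb"
    and C: "\<forall>as. set as \<subseteq> X \<and> length as \<le> B - 1 \<longrightarrow> info_gain k sn (take fb xs) as \<le> C"
    and Ef: "\<forall>x\<in>X. \<bar>post_mean k sn (take fb xs) ys x - f x\<bar>
                  \<le> ts_beta (card X) \<delta> t * post_sd k sn (take fb xs) x"
    and M: "prob_space M"
    and ft: "gaussian_field M ft X (post_mean k sn (take fb xs) ys)
               (\<lambda>x x'. (ts_beta (card X) \<delta> t)\<^sup>2 * post_cov k sn (take fb xs) x x')"
    and xt_meas: "xt \<in> measurable M (count_space UNIV)"
    and xt_argmax: "\<forall>\<omega>\<in>space M. xt \<omega> \<in> X \<and> (\<forall>x\<in>X. ft \<omega> x \<le> ft \<omega> (xt \<omega>))"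
  shows "(LINT \<omega>|M. f xstar - f (xt \<omega>))
           \<le> ts_c (card X) \<delta> t * exp C * (1 + 10 / ts_p) * (LINT \<omega>|M. post_sd k sn xs (xt \<omega>))
             + 2 * B' / (real t)\<^sup>2"
proof -
  let ?\<beta> = "ts_beta (card X) \<delta> t" and ?\<sigma> = "post_sd k sn (take fb xs)"
  let ?a = "sqrt (2 * ln (real (card X) * (real t)\<^sup>2))"
  have card_X: "1 \<le> card X" using X_fin X_ne by (simp add: Suc_le_eq card_gt_0_iff)
  have \<beta>: "0 < ?\<beta>" by (rule ts_beta_pos[OF card_X t delta])
  have past: "set (take fb xs) \<subseteq> X" "set (drop fb xs) \<subseteq> X"
    using hist_x(2) set_take_subset set_drop_subset by fast+
  interpret thompson_step M X f "post_mean k sn (take fb xs) ys"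
      "\<lambda>x x'. ?\<beta>\<^sup>2 * post_cov k sn (take fb xs) x x'" ft xt xstar
    by (rule thompson_step_posterior[OF M X_fin past(1) kernel noise \<beta> ft Ef xstar xt_meas xt_argmax])
  have "info_gain k sn (take fb xs) (drop fb xs) \<le> C" using C past(2) hist_x(1) fb by auto
  then have "?\<sigma> x \<le> exp C * post_sd k sn xs x" if "x \<in> X" for x
    using post_sd_le_exp_info_gain_mult[OF X_fin kernel noise that past] by simp
  then have E_le: "(LINT \<omega>|M. ?\<sigma> (xt \<omega>)) \<le> exp C * (LINT \<omega>|M. post_sd k sn xs (xt \<omega>))"
    using integral_mono[OF integrable_xt integrable_xt, of ?\<sigma> "\<lambda>x. exp C * post_sd k sn xs x"] xt_in_X
    by simp
  have "(LINT \<omega>|M. f xstar - f (xt \<omega>))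
      \<le> (1 + ?a) * (1 + 10 / ts_p) * (LINT \<omega>|M. sqrt (?\<beta>\<^sup>2 * post_cov k sn (take fb xs) (xt \<omega>) (xt \<omega>)))
        + 2 * B' / (real t)\<^sup>2"
    using expected_regret_bound[OF t] f_bound by simp
  also have "(LINT \<omega>|M. sqrt (?\<beta>\<^sup>2 * post_cov k sn (take fb xs) (xt \<omega>) (xt \<omega>))) = ?\<beta> * (LINT \<omega>|M. ?\<sigma> (xt \<omega>))"
    using \<beta> by (simp add: post_sd_def real_sqrt_mult)
  also have "(1 + ?a) * (1 + 10 / ts_p) * (?\<beta> * (LINT \<omega>|M. ?\<sigma> (xt \<omega>)))
      = ts_c (card X) \<delta> t * (1 + 10 / ts_p) * (LINT \<omega>|M. ?\<sigma> (xt \<omega>))"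
    unfolding ts_c_def by (simp only: mult_ac)
  also have "\<dots> \<le> ts_c (card X) \<delta> t * (1 + 10 / ts_p) * (exp C * (LINT \<omega>|M. post_sd k sn xs (xt \<omega>)))"
    using ts_c_nonneg[OF card_X t delta] by (intro mult_left_mono E_le) (simp add: ts_p_def)
  finally show ?thesis by (simp only: mult_ac)
qed

end
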